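(* Let $f_0$ be an arithmetic function, let $m>1$ and $n\ge1$. Then $C_m(n)=C_{m-1}(n)\cdot L_n$; equivalently, for all $1\le k\le n$, \[c_m(n,k)=\sum_{i=k}^n\binom{i-1}{k-1}c_{m-1}(n,i).\]
   Context: An arithmetic function is a function $f_0:\{1,2,\ldots\}\to\mathbb{C}$. For $m\ge 1$, $f_m$ is the invert transform of $f_{m-1}$, i.e. $f_m(n)=f_{m-1}(n)+\sum_{i=1}^{n-1}f_{m-1}(i)f_m(n-i)$ for $n\ge1$. For $m\ge1$ the numbers $c_m(n,k)$, $0\le k\le n$, are defined by $c_m(0,0)=1$, $c_m(n,0)=0$ for $n\ge1$, and $c_m(n,k)=\sum_{i=1}^{n-k+1}f_{m-1}(i)\,c_m(n-i,k-1)$ for $1\le k\le n$. $C_m(n)$ is the $n\times n$ lower triangular matrix whose $(r,k)$ entry is $c_m(r,k)$ for $1\le k\le r\le n$ (and $0$ for $k>r$), and $L_n$ is the $n\times n$ lower triangular Pascal matrix whose $(r,k)$ entry is $\binom{r-1}{k-1}$. *)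

theory Defs
  imports "Jordan_Normal_Form.Matrix"
begin

(* inv_tr f0 m n = f_m(n); arguments n \<ge> 1 are the meaningful ones,
   f0 0 is irrelevant (never used for n \<ge> 1). *)
function inv_tr :: "(nat \<Rightarrow> complex) \<Rightarrow> nat \<Rightarrow> nat \<Rightarrow> complex" where
  "inv_tr f0 0 n = f0 n"
| "inv_tr f0 (Suc m) n =
     inv_tr f0 m n + (\<Sum>i=1..n-1. inv_tr f0 m i * inv_tr f0 (Suc m) (n - i))"
  by pat_completeness auto
termination
  by (relation "measures [\<lambda>(f0,m,n). m, \<lambda>(f0,m,n). n]") auto

(* cc f0 m n k = c_m(n,k) for 0 \<le> k \<le> n (set to 0 for k > n, never used) *)
fun cc :: "(nat \<Rightarrow> complex) \<Rightarrow> nat \<Rightarrow> nat \<Rightarrow> nat \<Rightarrow> complex" where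
  "cc f0 m n 0 = (if n = 0 then 1 else 0)"
| "cc f0 m n (Suc k) =
     (if Suc k \<le> n then (\<Sum>i=1..n - Suc k + 1. inv_tr f0 (m - 1) i * cc f0 m (n - i) k) else 0)"

(* C_m(n): entry (r,k), 1 \<le> r,k \<le> n, stored at 0-based index (r-1,k-1) *)
definition Cmat :: "(nat \<Rightarrow> complex) \<Rightarrow> nat \<Rightarrow> nat \<Rightarrow> complex mat" where
  "Cmat f0 m n = mat n n (\<lambda>(r, k). if k \<le> r then cc f0 m (r + 1) (k + 1) else 0)"

(* Pascal matrix L_n: entry (r,k) = binom(r-1,k-1), 0-based: binom(r,k) *)
definition Lmat :: "nat \<Rightarrow> complex mat" where
  "Lmat n = mat n n (\<lambda>(r, k). of_nat (r choose k))"

end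

theory Submission
  imports Defs "HOL-Computational_Algebra.Formal_Power_Series"
begin

text \<open>
  With \<open>F\<^sub>m(x) = \<Sum>\<^sub>n\<^sub>\<ge>\<^sub>1 f\<^sub>m(n) x\<^sup>n\<close>, the invert transform reads
  \<open>F\<^sub>m = F\<^sub>m\<^sub>-\<^sub>1 + F\<^sub>m\<^sub>-\<^sub>1 F\<^sub>m\<close>, i.e. \<open>F\<^sub>m = A \<circ> F\<^sub>m\<^sub>-\<^sub>1\<close> with \<open>A(x) = x/(1 - x)\<close>,
  and \<open>c\<^sub>m(n,k)\<close> is the coefficient of \<open>x\<^sup>n\<close> in \<open>F\<^sub>m\<^sub>-\<^sub>1\<^sup>k\<close>. Hence
  \<open>F\<^sub>m\<^sub>-\<^sub>1\<^sup>k = A\<^sup>k \<circ> F\<^sub>m\<^sub>-\<^sub>2 = \<Sum>\<^sub>i [x\<^sup>i]A\<^sup>k \<cdot> F\<^sub>m\<^sub>-\<^sub>2\<^sup>i\<close>, and \<open>[x\<^sup>i]A\<^sup>k = binom(i-1,k-1)\<close>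
  is exactly the Pascal matrix.
\<close>

no_notation vec_index (infixl \<open>$\<close> 100)
notation fps_nth (infixl \<open>$\<close> 75)

definition fps_X_over_one_minus_X :: "'a::comm_ring_1 fps" where
  "fps_X_over_one_minus_X = Abs_fps (\<lambda>n. if n = 0 then 0 else 1)"

lemma fps_X_over_one_minus_X_times_one_minus_X:
  "fps_X_over_one_minus_X * (1 - fps_X) = (fps_X :: 'a::comm_ring_1 fps)"
proof (rule fps_ext)
  fix n
  have "(fps_X_over_one_minus_X * (1 - fps_X)) $ n
      = (fps_X_over_one_minus_X :: 'a fps) $ n - (fps_X_over_one_minus_X * fps_X) $ n"
    by (simp add: algebra_simps)
  then show "(fps_X_over_one_minus_X * (1 - fps_X)) $ n = (fps_X :: 'a fps) $ n"
    by (cases n) (simp_all add: fps_X_over_one_minus_X_def)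
qed

lemma fps_X_over_one_minus_X_power_nth:
  "(fps_X_over_one_minus_X ^ Suc k) $ Suc j = (of_nat (j choose k) :: 'a::comm_ring_1)"
proof (induction k arbitrary: j)
  case 0
  then show ?case by (simp add: fps_X_over_one_minus_X_def)
next
  case (Suc k)
  let ?A = "fps_X_over_one_minus_X :: 'a fps"
  have "(?A ^ Suc (Suc k)) $ Suc j = (\<Sum>i=0..Suc j. ?A $ i * (?A ^ Suc k) $ (Suc j - i))"
    by (simp add: fps_mult_nth)
  also have "\<dots> = (\<Sum>i=1..Suc j. (?A ^ Suc k) $ (Suc j - i))"
    by (simp add: sum.atLeast_Suc_atMost fps_X_over_one_minus_X_def)
  also have "\<dots> = (\<Sum>i=1..j. (?A ^ Suc k) $ (Suc j - i))"
    by (simp add: startsby_zero_power fps_X_over_one_minus_X_def)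
  also have "\<dots> = (\<Sum>t<j. (?A ^ Suc k) $ Suc t)"
    by (rule sum.reindex_bij_witness[where i="\<lambda>t. j - t" and j="\<lambda>i. j - i"])
       (auto simp: Suc_diff_le)
  also have "\<dots> = of_nat (\<Sum>t<j. t choose k)"
    using Suc.IH by (simp del: power_Suc)
  also have "(\<Sum>t<j. t choose k) = j choose Suc k"
    by (cases j) (simp_all add: lessThan_Suc_atMost sum_choose_upper)
  finally show ?case .
qed

lemma invert_transform_eq_compose:
  fixes G H :: "'a::idom fps"
  assumes G0: "G $ 0 = 0" and H: "H = G + G * H"
  shows "H = fps_X_over_one_minus_X oo G"
proof -
  have "(fps_X_over_one_minus_X oo G) * (1 - G) = (fps_X_over_one_minus_X * (1 - fps_X)) oo G"
    by (simp add: G0 fps_compose_mult_distrib fps_compose_sub_distrib)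
  also have "\<dots> = G"
    by (simp add: fps_X_over_one_minus_X_times_one_minus_X G0)
  also have "\<dots> = H * (1 - G)"
    using H by (simp add: algebra_simps)
  finally have "(fps_X_over_one_minus_X oo G) * (1 - G) = H * (1 - G)" .
  moreover have "1 - G \<noteq> 0"
    using G0 by (metis diff_zero fps_one_nth fps_sub_nth fps_zero_nth one_neq_zero)
  ultimately show ?thesis
    by simp
qed

lemma power_compose_X_over_one_minus_X_nth:
  fixes G :: "'a::idom fps"
  assumes G0: "G $ 0 = 0" and "r < M"
  shows "((fps_X_over_one_minus_X oo G) ^ Suc k) $ Suc r
         = (\<Sum>j<M. (G ^ Suc j) $ Suc r * of_nat (j choose k))"
proof -
  let ?A = "fps_X_over_one_minus_X :: 'a fps"
  have "((?A oo G) ^ Suc k) $ Suc r = (\<Sum>i=0..Suc r. (?A ^ Suc k) $ i * (G ^ i) $ Suc r)"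
    by (simp only: fps_compose_power[OF G0] fps_compose_nth)
  also have "\<dots> = (\<Sum>i=Suc 0..Suc r. (?A ^ Suc k) $ i * (G ^ i) $ Suc r)"
    by (subst sum.atLeast_Suc_atMost)
       (auto simp: startsby_zero_power fps_X_over_one_minus_X_def simp del: power_Suc)
  also have "\<dots> = (\<Sum>j=0..r. (G ^ Suc j) $ Suc r * of_nat (j choose k))"
    by (simp only: sum.shift_bounds_cl_Suc_ivl fps_X_over_one_minus_X_power_nth mult.commute)
  also have "\<dots> = (\<Sum>j<M. (G ^ Suc j) $ Suc r * of_nat (j choose k))"
    using assms startsby_zero_power_prefix[OF G0]
    by (intro sum.mono_neutral_left) (auto simp del: power_Suc)
  finally show ?thesis .
qed

declare inv_tr.simps [simp del] \<comment> \<open>the second equation loops as a rewrite rule\<close>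

definition inv_tr_fps :: "(nat \<Rightarrow> complex) \<Rightarrow> nat \<Rightarrow> complex fps" where
  "inv_tr_fps f0 m = Abs_fps (\<lambda>n. if n = 0 then 0 else inv_tr f0 m n)"

lemma inv_tr_fps_nth_0 [simp]: "inv_tr_fps f0 m $ 0 = 0"
  by (simp add: inv_tr_fps_def)

lemma inv_tr_fps_nth: "n \<noteq> 0 \<Longrightarrow> inv_tr_fps f0 m $ n = inv_tr f0 m n"
  by (simp add: inv_tr_fps_def)

lemma inv_tr_fps_Suc:
  "inv_tr_fps f0 (Suc m) = inv_tr_fps f0 m + inv_tr_fps f0 m * inv_tr_fps f0 (Suc m)"
proof (rule fps_ext)
  fix n
  let ?F = "inv_tr_fps f0 m" and ?G = "inv_tr_fps f0 (Suc m)"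
  show "?G $ n = (?F + ?F * ?G) $ n"
  proof (cases "n = 0")
    case False
    have "{0..n} = insert 0 (insert n {1..n-1})"
      using False by auto
    then have "(?F * ?G) $ n = (\<Sum>i=1..n-1. ?F $ i * ?G $ (n - i))"
      using False by (simp add: fps_mult_nth)
    also have "\<dots> = (\<Sum>i=1..n-1. inv_tr f0 m i * inv_tr f0 (Suc m) (n - i))"
      by (rule sum.cong) (auto simp: inv_tr_fps_nth)
    finally have "(?F * ?G) $ n = (\<Sum>i=1..n-1. inv_tr f0 m i * inv_tr f0 (Suc m) (n - i))" .
    then show ?thesis
      using False inv_tr.simps(2)[of f0 m n] by (simp add: inv_tr_fps_nth)
  qed simp
qed

lemma cc_eq_inv_tr_fps_power_nth: "cc f0 m n k = (inv_tr_fps f0 (m - 1) ^ k) $ n"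
proof (induction k arbitrary: n)
  case (Suc k)
  let ?F = "inv_tr_fps f0 (m - 1)"
  have vanish: "(?F ^ k) $ (n - i) = 0" if "n - Suc k + 1 < i" "i \<le> n" for i
    using that startsby_zero_power_prefix[of ?F k] by simp
  show ?case
  proof (cases "Suc k \<le> n")
    case True
    have "(?F ^ Suc k) $ n = (\<Sum>i=1..n. ?F $ i * (?F ^ k) $ (n - i))"
      by (simp add: fps_mult_nth sum.atLeast_Suc_atMost)
    also have "\<dots> = (\<Sum>i=1..n - Suc k + 1. ?F $ i * (?F ^ k) $ (n - i))"
      using True vanish by (intro sum.mono_neutral_right) auto
    also have "\<dots> = cc f0 m n (Suc k)"
      using True by (simp add: inv_tr_fps_nth Suc.IH)
    finally show ?thesis ..
  next
    case False
    then show ?thesis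
      using startsby_zero_power_prefix[of ?F "Suc k"] by simp
  qed
qed simp

lemma dim_row_Cmat [simp]: "dim_row (Cmat f0 m n) = n"
  and dim_col_Cmat [simp]: "dim_col (Cmat f0 m n) = n"
  and dim_row_Lmat [simp]: "dim_row (Lmat n) = n"
  and dim_col_Lmat [simp]: "dim_col (Lmat n) = n"
  by (simp_all add: Cmat_def Lmat_def)

lemma Cmat_nth:
  assumes "i < n" "j < n"
  shows "Cmat f0 m n $$ (i, j) = (inv_tr_fps f0 (m - 1) ^ Suc j) $ Suc i"
proof -
  have "Cmat f0 m n $$ (i, j) = (if j \<le> i then (inv_tr_fps f0 (m - 1) ^ (j + 1)) $ (i + 1) else 0)"
    using assms by (simp only: Cmat_def cc_eq_inv_tr_fps_power_nth index_mat case_prod_conv)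
  then show ?thesis
    using startsby_zero_power_prefix[of "inv_tr_fps f0 (m - 1)" "Suc j"] by simp
qed

theorem proposition6:
  fixes f0 :: "nat \<Rightarrow> complex" and m n :: nat
  assumes "m > 1" and "n \<ge> 1"
  shows "Cmat f0 m n = Cmat f0 (m - 1) n * Lmat n"
proof (rule eq_matI)
  define m' where "m' = m - 2"
  have m': "m = Suc (Suc m')"
    using assms(1) by (simp add: m'_def)
  fix i j
  assume "i < dim_row (Cmat f0 (m - 1) n * Lmat n)" "j < dim_col (Cmat f0 (m - 1) n * Lmat n)"
  then have i: "i < n" and j: "j < n"
    by simp_all
  have "(Cmat f0 (m - 1) n * Lmat n) $$ (i, j)
      = (\<Sum>t<n. (inv_tr_fps f0 m' ^ Suc t) $ Suc i * of_nat (t choose j))"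
    using i j
    by (simp add: index_mult_mat scalar_prod_def lessThan_atLeast0 Cmat_nth m' del: power_Suc)
       (simp add: Lmat_def)
  also have "\<dots> = (inv_tr_fps f0 (Suc m') ^ Suc j) $ Suc i"
    using invert_transform_eq_compose[OF inv_tr_fps_nth_0 inv_tr_fps_Suc]
    by (simp add: power_compose_X_over_one_minus_X_nth[OF inv_tr_fps_nth_0 i] del: power_Suc)
  also have "\<dots> = Cmat f0 m n $$ (i, j)"
    using i j by (simp add: Cmat_nth m' del: power_Suc)
  finally show "Cmat f0 m n $$ (i, j) = (Cmat f0 (m - 1) n * Lmat n) $$ (i, j)" ..
qed simp_all

end
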